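(* In the setting of the context, let $\Lambda:B\to B'$ be a CPTP map, and for a Choi matrix $J$ (of a channel $\mathcal{E}:A'\to B$) let $J'=(\mathrm{id}_{A'}\otimes\Lambda)(J)$ be the Choi matrix of $\Lambda\circ\mathcal{E}$, and define $\sigma^{g}_{J'},\sigma^{t}_{J'}$ on $AB'$ by the same formulas as $\rho^g_J,\rho^t_J$ with $J'$ in place of $J$. Assume: (a) there is a POVM $\{P'_c\}_{c\in\mathcal{C}'}$ on $AB'$ with $\Phi'_c[\sigma]=\operatorname{Tr}(P'_c\sigma)$ such that $\Phi'_c[(\mathrm{id}_A\otimes\Lambda)(\rho)]=\Phi_c[\rho]$ for all $c$ and all states $\rho$ on $AB$; (b) there are constants $\theta_1,\theta_2$, a subset $\mathcal{F}\subseteq\mathcal{C}'$, a POVM element $M^A$ on $A$ and projectors $\Pi^B$ on $B$, $\Pi^{B'}$ on $B'$ with $\operatorname{Tr}[(M^A\otimes\Pi^{B'})(\mathrm{id}_A\otimes\Lambda)(\rho)]=\operatorname{Tr}[(M^A\otimes\Pi^{B})\rho]$ for all $\rho$, such that $\sum_{c\in\mathcal{F}}\Phi_c[\rho]\ge\theta_1\big(\theta_2-\operatorname{Tr}[(M^A\otimes\Pi^B)\rho]\big)$ for all states $\rho$ on $AB$; (c) $\hat W$ is a real function on states of $AB'$ with $\hat W(\sigma^g_{J'})\le W(\rho^g_J)$ for every Choi matrix $J$. Then for every $\mathbf{g}\in\mathbb{R}^{|\mathcal{C}'|}$, every probability distribution $\mathbf{q}^{\mathrm{hon}}$ on $\mathcal{C}'$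 and every $\alpha\in(1,3/2)$, $$\inf_{J}\Big(W(\rho^{g}_J)+\mathbf{g}\cdot(\mathbf{q}^{\mathrm{hon}}-\boldsymbol\Phi[\rho^t_J])-c_\alpha\widetilde V(\boldsymbol\Phi[\rho^t_J],\mathbf{g})\Big)\ \ge\ \inf_{J'\in\mathcal{D}'}\Big(\hat W(\sigma^{g}_{J'})+\mathbf{g}\cdot(\mathbf{q}^{\mathrm{hon}}-\boldsymbol\Phi'[\sigma^t_{J'}])-c_\alpha\widetilde V(\boldsymbol\Phi'[\sigma^t_{J'}],\mathbf{g})\Big),$$ where the left infimum is over all Choi matrices $J$ on $A'B$, $c_\alpha=\frac{\alpha-1}{2-\alpha}\frac{\ln 2}{2}$, and $$\mathcal{D}'=\Big\{J'\ge0 \text{ on } A'B' : \operatorname{Tr}_{B'}J'=\mathbb{1}_{A'},\ \sum_{c\in\mathcal{F}}\Phi'_c[\sigma^t_{J'}]\ge\theta_1\big(\theta_2-\operatorname{Tr}[(M^A\otimes\Pi^{B'})\sigma^t_{J'}]\big)\Big\}.$$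
   Context: $A,A',B,B'$ are finite-dimensional systems, $\ket{\xi^g},\ket{\xi^t}$ pure states on $AA'$. A Choi matrix is $J\ge0$ on $A'B$ with $\operatorname{Tr}_B J=\mathbb{1}_{A'}$, and $\rho^{g}_J=\operatorname{Tr}_{A'}[(\mathbb{1}_A\otimes J)(\ket{\xi^g}\!\bra{\xi^g}^{T_{A'}}\otimes\mathbb{1}_B)]$, $\rho^{t}_J$ likewise with $\xi^t$. $W$ is a real-valued function of states on $AB$; $\mathcal{C}'$ is a finite alphabet, $\Phi_c[\rho]=\operatorname{Tr}(P_c\rho)$ for a POVM $\{P_c\}_{c\in\mathcal{C}'}$ on $AB$, $\boldsymbol\Phi=(\Phi_c)_c$. Given $\gamma\in(0,1]$, an integer $d_A\ge1$ and $\kappa\in\{1,2\}$, for a distribution $\mathbf{q}$ on $\mathcal{C}'$ and $\mathbf{g}\in\mathbb{R}^{|\mathcal{C}'|}$, $$\widetilde V(\mathbf{q},\mathbf{g})=\Big(\log_2(1+2d_A^\kappa)+\sqrt{2+\sum_{c}\tfrac{q_c}{\gamma}(\max(\mathbf{g})-g_c)^2-(\max(\mathbf{g})-\mathbf{g}\cdot\mathbf{q})^2}\Big)^2.$$ *)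

theory Defs
  imports Complex_Main "HOL-Library.Extended_Real"
begin

text \<open>Operators on a finite-dimensional Hilbert space with orthonormal basis indexed by
  a finite type are represented by their matrices, i.e. functions of two basis indices.
  Composite systems are indexed by product types.\<close>

type_synonym 'a cmat = "'a \<Rightarrow> 'a \<Rightarrow> complex"

definition idm :: "'a cmat" where
  "idm = (\<lambda>i j. if i = j then 1 else 0)"

definition mmult :: "'a::finite cmat \<Rightarrow> 'a cmat \<Rightarrow> 'a cmat" where
  "mmult M N = (\<lambda>i k. \<Sum>j\<in>UNIV. M i j * N j k)"

definition trace :: "'a::finite cmat \<Rightarrow> complex" where
  "trace M = (\<Sum>i\<in>UNIV. M i i)"

definition psd :: "'a::finite cmat \<Rightarrow> bool" where
  "psd M \<longleftrightarrow> (\<forall>v :: 'a \<Rightarrow> complex.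
      Im (\<Sum>i\<in>UNIV. \<Sum>j\<in>UNIV. cnj (v i) * M i j * v j) = 0 \<and>
      Re (\<Sum>i\<in>UNIV. \<Sum>j\<in>UNIV. cnj (v i) * M i j * v j) \<ge> 0)"

definition is_state :: "'a::finite cmat \<Rightarrow> bool" where
  "is_state \<rho> \<longleftrightarrow> psd \<rho> \<and> trace \<rho> = 1"

definition is_projector :: "'a::finite cmat \<Rightarrow> bool" where
  "is_projector P \<longleftrightarrow> mmult P P = P \<and> (\<forall>i j. P i j = cnj (P j i))"

definition is_povm_element :: "'a::finite cmat \<Rightarrow> bool" where
  "is_povm_element M \<longleftrightarrow> psd M \<and> psd (\<lambda>i j. idm i j - M i j)"

definition is_povm :: "('c::finite \<Rightarrow> 'a::finite cmat) \<Rightarrow> bool" where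
  "is_povm P \<longleftrightarrow> (\<forall>c. psd (P c)) \<and> (\<lambda>i j. \<Sum>c\<in>UNIV. P c i j) = idm"

definition kron :: "'a cmat \<Rightarrow> 'b cmat \<Rightarrow> ('a \<times> 'b) cmat" where
  "kron M N = (\<lambda>(i, j) (k, l). M i k * N j l)"

definition ptrace_snd :: "('a \<times> 'b::finite) cmat \<Rightarrow> 'a cmat" where
  "ptrace_snd M = (\<lambda>a c. \<Sum>b\<in>UNIV. M (a, b) (c, b))"

definition ptrace_mid :: "(('a \<times> 'x::finite) \<times> 'b) cmat \<Rightarrow> ('a \<times> 'b) cmat" where
  "ptrace_mid M = (\<lambda>(a, b) (c, d). \<Sum>x\<in>UNIV. M ((a, x), b) ((c, x), d))"

definition ptranspose_snd :: "('a \<times> 'b) cmat \<Rightarrow> ('a \<times> 'b) cmat" where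
  "ptranspose_snd X = (\<lambda>(a, a') (b, b'). X (a, b') (b, a'))"

definition assocL :: "('a \<times> ('x \<times> 'b)) cmat \<Rightarrow> (('a \<times> 'x) \<times> 'b) cmat" where
  "assocL M = (\<lambda>((a, x), b) ((c, y), d). M (a, (x, b)) (c, (y, d)))"

definition ketbra :: "('a \<Rightarrow> complex) \<Rightarrow> 'a cmat" where
  "ketbra \<xi> = (\<lambda>i j. \<xi> i * cnj (\<xi> j))"

definition pure_state :: "('a::finite \<Rightarrow> complex) \<Rightarrow> bool" where
  "pure_state \<xi> \<longleftrightarrow> (\<Sum>i\<in>UNIV. (cmod (\<xi> i))\<^sup>2) = 1"

definition is_choi :: "('a2::finite \<times> 'b::finite) cmat \<Rightarrow> bool" where
  "is_choi J \<longleftrightarrow> psd J \<and> ptrace_snd J = idm"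

text \<open>\<open>\<rho>_J = Tr_{A'}[(1_A \<otimes> J)(|\<xi>\<rangle>\<langle>\<xi>|^{T_{A'}} \<otimes> 1_B)]\<close> on \<open>AB\<close>.\<close>
definition rhoJ :: "('a::finite \<times> 'a2::finite \<Rightarrow> complex) \<Rightarrow> ('a2 \<times> 'b::finite) cmat
                   \<Rightarrow> ('a \<times> 'b) cmat" where
  "rhoJ \<xi> J = ptrace_mid (mmult (assocL (kron idm J)) (kron (ptranspose_snd (ketbra \<xi>)) idm))"

text \<open>\<open>\<Phi>_c[\<rho>] = Tr(P_c \<rho>)\<close> (real for the states considered; we take the real part).\<close>
definition Phi :: "('c \<Rightarrow> 'x::finite cmat) \<Rightarrow> 'x cmat \<Rightarrow> 'c \<Rightarrow> real" where
  "Phi P \<rho> = (\<lambda>c. Re (trace (mmult (P c) \<rho>)))"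

definition id_tensor :: "('b cmat \<Rightarrow> 'b2 cmat) \<Rightarrow> ('x \<times> 'b) cmat \<Rightarrow> ('x \<times> 'b2) cmat" where
  "id_tensor \<Lambda> M = (\<lambda>(x, b) (y, d). \<Lambda> (\<lambda>b0 d0. M (x, b0) (y, d0)) b d)"

definition linear_map :: "('b cmat \<Rightarrow> 'b2 cmat) \<Rightarrow> bool" where
  "linear_map \<Lambda> \<longleftrightarrow>
     (\<forall>X Y. \<Lambda> (\<lambda>i j. X i j + Y i j) = (\<lambda>i j. \<Lambda> X i j + \<Lambda> Y i j)) \<and>
     (\<forall>a X. \<Lambda> (\<lambda>i j. a * X i j) = (\<lambda>i j. a * \<Lambda> X i j))"

text \<open>Positive semidefiniteness of an operator on \<open>\<complex>^n \<otimes> H_B\<close>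
  (ancilla basis \<open>{0..<n}\<close>), used to define complete positivity.\<close>
definition psd_anc :: "nat \<Rightarrow> (nat \<times> 'b::finite) cmat \<Rightarrow> bool" where
  "psd_anc n M \<longleftrightarrow> (\<forall>v :: nat \<times> 'b \<Rightarrow> complex.
     Im (\<Sum>i<n. \<Sum>j<n. \<Sum>b\<in>UNIV. \<Sum>d\<in>UNIV. cnj (v (i, b)) * M (i, b) (j, d) * v (j, d)) = 0 \<and>
     Re (\<Sum>i<n. \<Sum>j<n. \<Sum>b\<in>UNIV. \<Sum>d\<in>UNIV. cnj (v (i, b)) * M (i, b) (j, d) * v (j, d)) \<ge> 0)"

definition completely_positive :: "('b::finite cmat \<Rightarrow> 'b2::finite cmat) \<Rightarrow> bool" where
  "completely_positive \<Lambda> \<longleftrightarrow> (\<forall>n M. psd_anc n M \<longrightarrow> psd_anc n (id_tensor \<Lambda> M))"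

definition trace_preserving :: "('b::finite cmat \<Rightarrow> 'b2::finite cmat) \<Rightarrow> bool" where
  "trace_preserving \<Lambda> \<longleftrightarrow> (\<forall>X. trace (\<Lambda> X) = trace X)"

definition cptp :: "('b::finite cmat \<Rightarrow> 'b2::finite cmat) \<Rightarrow> bool" where
  "cptp \<Lambda> \<longleftrightarrow> linear_map \<Lambda> \<and> completely_positive \<Lambda> \<and> trace_preserving \<Lambda>"

definition is_distribution :: "('c::finite \<Rightarrow> real) \<Rightarrow> bool" where
  "is_distribution q \<longleftrightarrow> (\<forall>c. q c \<ge> 0) \<and> (\<Sum>c\<in>UNIV. q c) = 1"

definition Vtilde :: "real \<Rightarrow> nat \<Rightarrow> nat \<Rightarrow> ('c::finite \<Rightarrow> real) \<Rightarrow> ('c \<Rightarrow> real) \<Rightarrow> real" where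
  "Vtilde \<gamma> dA \<kappa> q g =
     (let mg = Max (range g) in
      (log 2 (1 + 2 * real dA ^ \<kappa>) +
       sqrt (2 + (\<Sum>c\<in>UNIV. q c / \<gamma> * (mg - g c)\<^sup>2) - (mg - (\<Sum>c\<in>UNIV. g c * q c))\<^sup>2))\<^sup>2)"

definition c_alpha :: "real \<Rightarrow> real" where
  "c_alpha \<alpha> = (\<alpha> - 1) / (2 - \<alpha>) * ln 2 / 2"


end

theory Submission
  imports Defs
begin

text \<open>Since \<open>\<Lambda>\<close> acts on \<open>B\<close> only, it commutes with \<open>J \<mapsto> \<rho>_J\<close>, so
  \<open>\<sigma>_{J'} = (id \<otimes> \<Lambda>)(\<rho>_J)\<close>. Hypotheses (a) and (b) then give \<open>\<Phi>'[\<sigma>^t_{J'}] = \<Phi>[\<rho>^t_J]\<close> and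
  \<open>J' \<in> \<D>'\<close>, and (c) gives \<open>\<hat>W(\<sigma>^g_{J'}) \<le> W(\<rho>^g_J)\<close>. Every term of the left infimum therefore
  dominates a term of the right one.\<close>

lemma sum_UNIV_prod:
  "(\<Sum>p\<in>(UNIV :: ('x::finite \<times> 'y::finite) set). f p) = (\<Sum>x\<in>UNIV. \<Sum>y\<in>UNIV. f (x, y))"
  using sum.cartesian_product[of "\<lambda>x y. f (x, y)" UNIV UNIV] by simp

lemma idm_sym: "idm i j = idm j i"
  by (simp add: idm_def)

lemma sum_idm_left: "(\<Sum>j\<in>UNIV. idm i j * f j) = f (i :: 'a::finite)"
proof -
  have "(\<Sum>j\<in>UNIV. idm i j * f j) = (\<Sum>j\<in>UNIV. if i = j then f j else 0)"
    by (rule sum.cong) (simp_all add: idm_def)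
  then show ?thesis by simp
qed

lemma sum_idm_right: "(\<Sum>j\<in>UNIV. f j * idm j i) = f (i :: 'a::finite)"
  using sum_idm_left[of i f] by (simp add: idm_sym mult.commute)

definition qform :: "'a::finite cmat \<Rightarrow> ('a \<Rightarrow> complex) \<Rightarrow> complex" where
  "qform M v = (\<Sum>i\<in>UNIV. \<Sum>j\<in>UNIV. cnj (v i) * M i j * v j)"

lemma psd_iff_qform: "psd M \<longleftrightarrow> (\<forall>v. Im (qform M v) = 0 \<and> 0 \<le> Re (qform M v))"
  by (simp add: psd_def qform_def)

lemma qform_prod:
  "qform (M :: ('x::finite \<times> 'b::finite) cmat) v
     = (\<Sum>x\<in>UNIV. \<Sum>y\<in>UNIV. \<Sum>b\<in>UNIV. \<Sum>d\<in>UNIV. cnj (v (x, b)) * M (x, b) (y, d) * v (y, d))"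
  unfolding qform_def sum_UNIV_prod by (rule sum.cong[OF refl], rule sum.swap)

text \<open>Enumerating \<open>'x\<close> by \<open>h\<close> identifies the quadratic forms on \<open>'x \<times> 'b\<close> with those on
  \<open>\<complex>^n \<otimes> H_b\<close>, where complete positivity is formulated.\<close>

lemma qform_reindex:
  assumes h: "bij_betw h {..<n} (UNIV :: 'x::finite set)"
  shows "(\<Sum>i<n. \<Sum>j<n. \<Sum>b\<in>UNIV. \<Sum>d\<in>UNIV.
            cnj (v (h i, b)) * M (h i, b) (h j, d) * v (h j, d))
         = qform (M :: ('x \<times> 'b::finite) cmat) v"
  unfolding qform_prod sum.reindex_bij_betw[OF h,
      of "\<lambda>x. \<Sum>y\<in>UNIV. \<Sum>b\<in>UNIV. \<Sum>d\<in>UNIV. cnj (v (x, b)) * M (x, b) (y, d) * v (y, d)", symmetric]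
  by (intro sum.cong refl sum.reindex_bij_betw[OF h])

lemma psd_anc_reindex_iff:
  assumes h: "bij_betw h {..<n} (UNIV :: 'x::finite set)"
  shows "psd_anc n (\<lambda>(i, b) (j, d). M (h i, b) (h j, d)) \<longleftrightarrow> psd (M :: ('x \<times> 'b::finite) cmat)"
proof -
  have anc_form: "(\<Sum>i<n. \<Sum>j<n. \<Sum>b\<in>UNIV. \<Sum>d\<in>UNIV.
                     cnj (v (i, b)) * (\<lambda>(i, b) (j, d). M (h i, b) (h j, d)) (i, b) (j, d) * v (j, d))
                  = qform M (\<lambda>(x, b). v (inv_into {..<n} h x, b))" for v :: "nat \<times> 'b \<Rightarrow> complex"
    unfolding qform_reindex[OF h, symmetric]
    using h by (intro sum.cong refl) (simp add: bij_betw_def)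
  show ?thesis
  proof
    assume anc: "psd_anc n (\<lambda>(i, b) (j, d). M (h i, b) (h j, d))"
    show "psd M"
      unfolding psd_iff_qform
    proof
      fix u
      show "Im (qform M u) = 0 \<and> 0 \<le> Re (qform M u)"
        using anc[unfolded psd_anc_def, THEN spec[of _ "\<lambda>(i, b). u (h i, b)"]]
        by (simp add: qform_reindex[OF h])
    qed
  next
    assume "psd M"
    then show "psd_anc n (\<lambda>(i, b) (j, d). M (h i, b) (h j, d))"
      unfolding psd_anc_def anc_form psd_iff_qform by blast
  qed
qed

lemma linear_map_add:
  "linear_map \<Lambda> \<Longrightarrow> \<Lambda> (\<lambda>i j. X i j + Y i j) = (\<lambda>i j. \<Lambda> X i j + \<Lambda> Y i j)"
  by (simp add: linear_map_def)

lemma linear_map_scale: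
  "linear_map \<Lambda> \<Longrightarrow> \<Lambda> (\<lambda>i j. a * X i j) = (\<lambda>i j. a * \<Lambda> X i j)"
  by (simp add: linear_map_def)

lemma linear_map_zero: "linear_map \<Lambda> \<Longrightarrow> \<Lambda> (\<lambda>i j. 0) = (\<lambda>i j. 0)"
  using linear_map_scale[of \<Lambda> 0 "\<lambda>i j. 0"] by simp

lemma linear_map_sum:
  assumes L: "linear_map \<Lambda>" and "finite S"
  shows "\<Lambda> (\<lambda>i j. \<Sum>k\<in>S. f k i j) = (\<lambda>i j. \<Sum>k\<in>S. \<Lambda> (f k) i j)"
  using \<open>finite S\<close>
proof (induction S rule: finite_induct)
  case empty
  then show ?case using linear_map_zero[OF L] by simp
next
  case (insert x S)
  then show ?case
    using linear_map_add[OF L, of "f x" "\<lambda>i j. \<Sum>k\<in>S. f k i j"] by simp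
qed

lemma rhoJ_apply:
  "rhoJ \<xi> (J :: ('a2::finite \<times> 'b::finite) cmat) (a :: 'a::finite, b) (c, d)
     = (\<Sum>x\<in>UNIV. \<Sum>y\<in>UNIV. \<xi> (a, x) * cnj (\<xi> (c, y)) * J (x, b) (y, d))"
proof -
  have "rhoJ \<xi> J (a, b) (c, d) = (\<Sum>x\<in>UNIV. \<Sum>a'\<in>UNIV. \<Sum>y\<in>UNIV. \<Sum>b'\<in>UNIV.
      idm a a' * (J (x, b) (y, b') * \<xi> (a', x) * cnj (\<xi> (c, y)) * idm b' d))"
    by (simp add: rhoJ_def ptrace_mid_def mmult_def assocL_def kron_def ptranspose_snd_def
                  ketbra_def sum_UNIV_prod mult_ac)
  also have "\<dots> = (\<Sum>x\<in>UNIV. \<Sum>y\<in>UNIV. \<Sum>b'\<in>UNIV. J (x, b) (y, b') * \<xi> (a, x) * cnj (\<xi> (c, y)) * idm b' d)"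
    by (simp only: sum_distrib_left[symmetric] sum_idm_left)
  also have "\<dots> = (\<Sum>x\<in>UNIV. \<Sum>y\<in>UNIV. \<xi> (a, x) * cnj (\<xi> (c, y)) * J (x, b) (y, d))"
    by (simp only: sum_idm_right) (simp add: mult_ac)
  finally show ?thesis .
qed

lemma rhoJ_id_tensor:
  fixes \<xi> :: "'a::finite \<times> 'a2::finite \<Rightarrow> complex" and J :: "('a2 \<times> 'b::finite) cmat"
    and \<Lambda> :: "'b cmat \<Rightarrow> 'b2::finite cmat"
  assumes L: "linear_map \<Lambda>"
  shows "rhoJ \<xi> (id_tensor \<Lambda> J) = id_tensor \<Lambda> (rhoJ \<xi> J)"
proof (intro ext)
  fix p q :: "'a \<times> 'b2"
  obtain a b c d where pq: "p = (a, b)" "q = (c, d)" by force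
  have "\<Lambda> (\<lambda>b0 d0. \<Sum>x\<in>UNIV. \<Sum>y\<in>UNIV. \<xi> (a, x) * cnj (\<xi> (c, y)) * J (x, b0) (y, d0))
      = (\<lambda>b0 d0. \<Sum>x\<in>UNIV. \<Sum>y\<in>UNIV. \<xi> (a, x) * cnj (\<xi> (c, y)) * \<Lambda> (\<lambda>b0 d0. J (x, b0) (y, d0)) b0 d0)"
    by (simp add: linear_map_sum[OF L] linear_map_scale[OF L])
  then show "rhoJ \<xi> (id_tensor \<Lambda> J) p q = id_tensor \<Lambda> (rhoJ \<xi> J) p q"
    by (simp add: pq id_tensor_def rhoJ_apply)
qed

lemma psd_rhoJ:
  assumes "psd J"
  shows "psd (rhoJ (\<xi> :: 'a::finite \<times> 'a2::finite \<Rightarrow> complex) (J :: ('a2 \<times> 'b::finite) cmat))"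
  unfolding psd_iff_qform
proof
  fix v :: "'a \<times> 'b \<Rightarrow> complex"
  \<comment> \<open>\<open>\<rho>_J\<close> is the congruence \<open>K J K\<^sup>*\<close> with \<open>K_{(a,b),(x,b)} = \<xi>(a,x)\<close>; \<open>w = K\<^sup>* v\<close>.\<close>
  define w where "w = (\<lambda>(y, d). \<Sum>c\<in>UNIV. cnj (\<xi> (c, y)) * v (c, d))"
  let ?E = "\<lambda>a b c d x y. (\<xi> (a, x) * cnj (v (a, b))) * J (x, b) (y, d) * (cnj (\<xi> (c, y)) * v (c, d))"
  have "qform (rhoJ \<xi> J) v = (\<Sum>a\<in>UNIV. \<Sum>b\<in>UNIV. \<Sum>c\<in>UNIV. \<Sum>d\<in>UNIV. \<Sum>x\<in>UNIV. \<Sum>y\<in>UNIV.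
      cnj (v (a, b)) * (\<xi> (a, x) * cnj (\<xi> (c, y)) * J (x, b) (y, d)) * v (c, d))"
    by (simp only: qform_def sum_UNIV_prod rhoJ_apply sum_distrib_left sum_distrib_right)
  also have "\<dots> = (\<Sum>(a, b, c, d, x, y)\<in>UNIV. ?E a b c d x y)"
    by (simp only: sum_UNIV_prod split_conv) (intro sum.cong refl, simp add: mult_ac)
  also have "\<dots> = (\<Sum>(x, b, y, d, c, a)\<in>UNIV. ?E a b c d x y)"
    by (rule sum.reindex_bij_witness[of _ "\<lambda>(x, b, y, d, c, a). (a, b, c, d, x, y)"
                                           "\<lambda>(a, b, c, d, x, y). (x, b, y, d, c, a)"]) auto
  also have "\<dots> = qform J w"
    by (simp only: qform_def sum_UNIV_prod split_conv w_def cnj_sum complex_cnj_mult complex_cnj_cnj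
          sum_distrib_left sum_distrib_right)
  finally have "qform (rhoJ \<xi> J) v = qform J w" .
  then show "Im (qform (rhoJ \<xi> J) v) = 0 \<and> 0 \<le> Re (qform (rhoJ \<xi> J) v)"
    using assms unfolding psd_iff_qform by presburger
qed

lemma trace_rhoJ:
  assumes "pure_state \<xi>" and "ptrace_snd J = idm"
  shows "trace (rhoJ (\<xi> :: 'a::finite \<times> 'a2::finite \<Rightarrow> complex) (J :: ('a2 \<times> 'b::finite) cmat)) = 1"
proof -
  have "trace (rhoJ \<xi> J) = (\<Sum>a\<in>UNIV. \<Sum>x\<in>UNIV. \<Sum>y\<in>UNIV. \<xi> (a, x) * cnj (\<xi> (a, y)) * ptrace_snd J x y)"
    by (simp add: trace_def ptrace_snd_def sum_UNIV_prod rhoJ_apply sum_distrib_left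
          sum.swap[of _ "UNIV :: 'b set"])
  also have "\<dots> = (\<Sum>a\<in>UNIV. \<Sum>x\<in>UNIV. \<xi> (a, x) * cnj (\<xi> (a, x)))"
    using sum_idm_right[of "\<lambda>y. \<xi> (_, _) * cnj (\<xi> (_, y))"] by (simp add: assms(2) idm_sym)
  also have "\<dots> = (\<Sum>a\<in>UNIV. \<Sum>x\<in>UNIV. complex_of_real ((cmod (\<xi> (a, x)))\<^sup>2))"
    by (simp only: complex_norm_square)
  also have "\<dots> = complex_of_real (\<Sum>p\<in>UNIV. (cmod (\<xi> p))\<^sup>2)"
    by (simp add: sum_UNIV_prod)
  also have "\<dots> = 1"
    using assms(1) by (simp add: pure_state_def)
  finally show ?thesis .
qed

lemma is_state_rhoJ: "pure_state \<xi> \<Longrightarrow> is_choi J \<Longrightarrow> is_state (rhoJ \<xi> J)"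
  by (simp add: is_state_def is_choi_def psd_rhoJ trace_rhoJ)

lemma ptrace_snd_id_tensor:
  "trace_preserving \<Lambda> \<Longrightarrow> ptrace_snd (id_tensor \<Lambda> J) = ptrace_snd J"
  by (auto simp: ptrace_snd_def id_tensor_def trace_preserving_def trace_def)

lemma psd_id_tensor:
  fixes \<Lambda> :: "'b::finite cmat \<Rightarrow> 'b2::finite cmat"
  assumes "completely_positive \<Lambda>" and "psd (J :: ('x::finite \<times> 'b) cmat)"
  shows "psd (id_tensor \<Lambda> J)"
proof -
  obtain h where h: "bij_betw h {..<card (UNIV :: 'x set)} (UNIV :: 'x set)"
    using ex_bij_betw_nat_finite[OF finite_UNIV] by (auto simp: atLeast0LessThan)
  have "psd_anc (card (UNIV :: 'x set)) (\<lambda>(i, b) (j, d). J (h i, b) (h j, d))"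
    using assms(2) psd_anc_reindex_iff[OF h] by blast
  then have "psd_anc (card (UNIV :: 'x set)) (id_tensor \<Lambda> (\<lambda>(i, b) (j, d). J (h i, b) (h j, d)))"
    using assms(1) by (simp add: completely_positive_def)
  moreover have "id_tensor \<Lambda> (\<lambda>(i, b) (j, d). J (h i, b) (h j, d))
                   = (\<lambda>(i, b) (j, d). id_tensor \<Lambda> J (h i, b) (h j, d))"
    by (auto simp: id_tensor_def)
  ultimately show ?thesis
    using psd_anc_reindex_iff[OF h, of "id_tensor \<Lambda> J"] by simp
qed

lemma is_choi_id_tensor: "cptp \<Lambda> \<Longrightarrow> is_choi J \<Longrightarrow> is_choi (id_tensor \<Lambda> J)"
  by (simp add: is_choi_def cptp_def psd_id_tensor ptrace_snd_id_tensor)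

theorem mainTheorem3:
  fixes \<xi>g \<xi>t :: "'a::finite \<times> 'a2::finite \<Rightarrow> complex"
    and W :: "('a \<times> 'b::finite) cmat \<Rightarrow> real"
    and What :: "('a \<times> 'b2::finite) cmat \<Rightarrow> real"
    and P :: "'c::finite \<Rightarrow> ('a \<times> 'b) cmat"
    and P' :: "'c \<Rightarrow> ('a \<times> 'b2) cmat"
    and \<Lambda> :: "'b cmat \<Rightarrow> 'b2 cmat"
    and \<gamma> :: real and dA :: nat and \<kappa> :: nat
    and \<theta>1 \<theta>2 :: real and F :: "'c set"
    and MA :: "'a cmat" and PiB :: "'b cmat" and PiB' :: "'b2 cmat"
    and g qhon :: "'c \<Rightarrow> real" and \<alpha> :: real
  assumes xig: "pure_state \<xi>g" and xit: "pure_state \<xi>t"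
    and gamma: "0 < \<gamma>" "\<gamma> \<le> 1"
    and dA: "dA \<ge> 1" and kappa: "\<kappa> \<in> {1, 2}"
    and povmP: "is_povm P"
    and Lam: "cptp \<Lambda>"
    and povmP': "is_povm P'"
    and a: "\<And>\<rho> c. is_state \<rho> \<Longrightarrow> Phi P' (id_tensor \<Lambda> \<rho>) c = Phi P \<rho> c"
    and MA: "is_povm_element MA"
    and PiB: "is_projector PiB" and PiB': "is_projector PiB'"
    and bcompat: "\<And>\<rho>. is_state \<rho> \<Longrightarrow>
        trace (mmult (kron MA PiB') (id_tensor \<Lambda> \<rho>)) = trace (mmult (kron MA PiB) \<rho>)"
    and bineq: "\<And>\<rho>. is_state \<rho> \<Longrightarrow>
        (\<Sum>c\<in>F. Phi P \<rho> c) \<ge> \<theta>1 * (\<theta>2 - Re (trace (mmult (kron MA PiB) \<rho>)))"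
    and c: "\<And>J. is_choi (J :: ('a2 \<times> 'b) cmat) \<Longrightarrow>
        What (rhoJ \<xi>g (id_tensor \<Lambda> J)) \<le> W (rhoJ \<xi>g J)"
    and qhon: "is_distribution qhon"
    and alpha: "1 < \<alpha>" "\<alpha> < 3 / 2"
  shows "(INF J\<in>{J :: ('a2 \<times> 'b) cmat. is_choi J}.
            ereal (W (rhoJ \<xi>g J)
                   + (\<Sum>c\<in>UNIV. g c * (qhon c - Phi P (rhoJ \<xi>t J) c))
                   - c_alpha \<alpha> * Vtilde \<gamma> dA \<kappa> (Phi P (rhoJ \<xi>t J)) g))
         \<ge> (INF J'\<in>{J' :: ('a2 \<times> 'b2) cmat. psd J' \<and> ptrace_snd J' = idm \<and>
                 (\<Sum>c\<in>F. Phi P' (rhoJ \<xi>t J') c)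
                   \<ge> \<theta>1 * (\<theta>2 - Re (trace (mmult (kron MA PiB') (rhoJ \<xi>t J'))))}.
            ereal (What (rhoJ \<xi>g J')
                   + (\<Sum>c\<in>UNIV. g c * (qhon c - Phi P' (rhoJ \<xi>t J') c))
                   - c_alpha \<alpha> * Vtilde \<gamma> dA \<kappa> (Phi P' (rhoJ \<xi>t J')) g))"
proof (rule INF_mono, goal_cases)
  case (1 J)
  then have choi: "is_choi J" by simp
  have state: "is_state (rhoJ \<xi>t J)"
    using is_state_rhoJ[OF xit choi] .
  have sigma_t: "rhoJ \<xi>t (id_tensor \<Lambda> J) = id_tensor \<Lambda> (rhoJ \<xi>t J)"
    using Lam by (simp add: cptp_def rhoJ_id_tensor)
  have Phi_eq: "Phi P' (rhoJ \<xi>t (id_tensor \<Lambda> J)) = Phi P (rhoJ \<xi>t J)"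
    unfolding sigma_t using a[OF state] by (rule ext)
  have MA_eq: "trace (mmult (kron MA PiB') (rhoJ \<xi>t (id_tensor \<Lambda> J)))
                 = trace (mmult (kron MA PiB) (rhoJ \<xi>t J))"
    unfolding sigma_t using bcompat[OF state] .
  show ?case
    using is_choi_id_tensor[OF Lam choi] bineq[OF state] c[OF choi]
    by (intro bexI[of _ "id_tensor \<Lambda> J"]) (auto simp: is_choi_def Phi_eq MA_eq)
qed

end
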